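(* Let $d\ge2$, $y_1,y_2\in\mathbb{S}^{d-1}$ and $0<r_1,r_2<\frac12$. For $i=1,2$ let $B_i$ be the open ball of radius $r_i$ centered at $(1-r_i)y_i$ (internally tangent to $\mathbb{S}^{d-1}$ at $y_i$). If $x\in B_1$ and $x\notin B_2$, then $$\frac{|x-y_1|}{|x-y_2|}\ \le\ \left(\frac{r_1}{r_2}\cdot\frac{1-r_2}{1-r_1}\right)^{1/2}.$$
   Context: $\mathbb{S}^{d-1}$ is the unit sphere of $\mathbb R^d$; $|\cdot|$ is the Euclidean norm. *)

theory Defs
  imports "HOL-Analysis.Analysis"
begin

end

theory Submission
  imports Defs
begin

text \<open>For a unit vector y, expanding the squares gives
  \<open>|x - (1 - r) y|\<^sup>2 - r\<^sup>2 = (1 - r) |x - y|\<^sup>2 - r (1 - |x|\<^sup>2)\<close>.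
  Hence x lies in the ball of radius r internally tangent to the unit sphere at y exactly when
  \<open>(1 - r) |x - y|\<^sup>2 < r (1 - |x|\<^sup>2)\<close>. Writing this for the ball containing x and the
  reversed inequality for the one avoiding x, and dividing, eliminates the common factor
  \<open>1 - |x|\<^sup>2\<close>, which is positive because x lies in the first ball.\<close>

lemma norm_diff_tangent_centre_sq:
  fixes x y :: "'a::real_inner"
  assumes "norm y = 1"
  shows "(norm (x - (1 - r) *\<^sub>R y))\<^sup>2 - r\<^sup>2 = (1 - r) * (norm (x - y))\<^sup>2 - r * (1 - (norm x)\<^sup>2)"
proof -
  have lhs: "(norm (x - (1 - r) *\<^sub>R y))\<^sup>2 = x \<bullet> x - 2 * (1 - r) * (x \<bullet> y) + (1 - r)\<^sup>2 * (y \<bullet> y)"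
    unfolding power2_norm_eq_inner
    by (simp add: inner_diff_left inner_diff_right inner_commute power2_eq_square algebra_simps)
  have rhs: "(norm (x - y))\<^sup>2 = x \<bullet> x - 2 * (x \<bullet> y) + y \<bullet> y"
    by (simp add: power2_norm_eq_inner inner_diff_left inner_diff_right inner_commute)
  have "y \<bullet> y = 1" "(norm x)\<^sup>2 = x \<bullet> x"
    using assms by (simp_all flip: power2_norm_eq_inner)
  then show ?thesis
    unfolding lhs rhs by (simp add: algebra_simps power2_eq_square)
qed

lemma mem_ball_tangent_iff:
  fixes x y :: "'a::real_inner"
  assumes "norm y = 1" and "0 \<le> r"
  shows "x \<in> ball ((1 - r) *\<^sub>R y) r \<longleftrightarrow> (1 - r) * (norm (x - y))\<^sup>2 < r * (1 - (norm x)\<^sup>2)"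
proof -
  have "x \<in> ball ((1 - r) *\<^sub>R y) r \<longleftrightarrow> norm (x - (1 - r) *\<^sub>R y) < r"
    by (simp add: dist_norm norm_minus_commute)
  also have "\<dots> \<longleftrightarrow> (norm (x - (1 - r) *\<^sub>R y))\<^sup>2 < r\<^sup>2"
    using assms(2) by (auto intro: power_strict_mono power2_less_imp_less)
  finally show ?thesis
    using norm_diff_tangent_centre_sq[OF assms(1), of x r] by linarith
qed

lemma tangent_ball_ratio_le:
  fixes a b s r1 r2 :: real
  assumes "0 \<le> a" and "0 < r1" and "r1 < 1" and "0 < r2" and "r2 < 1"
    and in_first: "(1 - r1) * a < r1 * s" and out_second: "r2 * s \<le> (1 - r2) * b"
  shows "a / b \<le> (r1 / r2) * ((1 - r2) / (1 - r1))"
proof -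
  have "0 < s"
    using assms by (smt (verit) mult_nonneg_nonneg mult_nonneg_nonpos)
  then have "0 < b"
    using assms by (smt (verit) mult_pos_pos mult_nonneg_nonpos)
  have "r2 * ((1 - r1) * a) \<le> r2 * (r1 * s)"
    using in_first \<open>0 < r2\<close> by simp
  also have "\<dots> = r1 * (r2 * s)"
    by simp
  also have "\<dots> \<le> r1 * ((1 - r2) * b)"
    using out_second \<open>0 < r1\<close> by simp
  finally show ?thesis
    using \<open>0 < b\<close> assms(2-5) by (simp add: field_simps)
qed

theorem lemma2p3:
  fixes x y1 y2 :: "'a::euclidean_space" and r1 r2 :: real
  assumes "DIM('a) \<ge> 2"
    and "y1 \<in> sphere 0 1" and "y2 \<in> sphere 0 1"
    and "0 < r1" and "r1 < 1/2" and "0 < r2" and "r2 < 1/2"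
    and "x \<in> ball ((1 - r1) *\<^sub>R y1) r1"
    and "x \<notin> ball ((1 - r2) *\<^sub>R y2) r2"
  shows "norm (x - y1) / norm (x - y2) \<le> ((r1 / r2) * ((1 - r2) / (1 - r1))) powr (1/2)"
proof -
  have "(1 - r1) * (norm (x - y1))\<^sup>2 < r1 * (1 - (norm x)\<^sup>2)"
    using assms(2,4,8) mem_ball_tangent_iff[of y1 r1 x] by simp
  moreover have "r2 * (1 - (norm x)\<^sup>2) \<le> (1 - r2) * (norm (x - y2))\<^sup>2"
    using assms(3,6,9) mem_ball_tangent_iff[of y2 r2 x] by simp
  ultimately have "(norm (x - y1))\<^sup>2 / (norm (x - y2))\<^sup>2 \<le> (r1 / r2) * ((1 - r2) / (1 - r1))"
    using assms(4-7) by (intro tangent_ball_ratio_le) auto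
  then have "sqrt ((norm (x - y1))\<^sup>2 / (norm (x - y2))\<^sup>2) \<le> sqrt ((r1 / r2) * ((1 - r2) / (1 - r1)))"
    by (rule real_sqrt_le_mono)
  then show ?thesis
    using assms(4-7) by (simp add: real_sqrt_divide powr_half_sqrt)
qed

end
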